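(* Let $\varepsilon>0$, $\beta\in(0,1)$, $\delta\in(0,1)$, and let $G$ be a graph with at least one edge. Run: set $T=-\frac{8}{\varepsilon}\ln\frac4\beta$, $\tilde T=T+\mathrm{Lap}(4/\varepsilon)$; for $\tau=1,2,4,8,\dots$ compute $\tilde Q_\tau=Q_{\mathrm{Del\text{-}N}}(G,\tau)+\mathrm{Lap}(4/\varepsilon)$ and stop at the first $\tau$ with $\tilde Q_\tau>\tilde T$; then output $$\tau^*=\tau+|Q_{\mathrm{Del\text{-}N}}(G,\tau)|+\mathrm{Lap}(2/\varepsilon)+\frac2\varepsilon\ln\max\Big(\frac1\delta,\frac2\beta\Big)+1.$$ Then with probability at least $1-\beta$, $$\tau^*\le2\deg(G)+\frac8\varepsilon\ln\log(4\deg(G))+\frac{16}{\varepsilon}\ln\frac4\beta+\frac4\varepsilon\ln\max\Big(\frac1\delta,\frac2\beta\Big)+1$$ and $$N_{\tau^*}(G)\le\frac8\varepsilon\ln\log(4\deg(G))+\frac{16}\varepsilon\ln\frac4\beta.$$ Furthermore, with probability at least $1-\delta$, $\tau^*+N_{\tau^*}(G)\le2\tau^*$.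
   Context: Graphs are finite, simple, undirected; $\deg(G)$ is the maximum degree; $N_t(G)$ is the number of nodes of $G$ of degree at least $t$. $H\subseteq G$ means $H$ is obtained from $G$ by deleting a set of nodes with all their incident edges. $Q_{\mathrm{Del\text{-}N}}(G,\tau)=-\min\{|V(G)|-|V(G^* )|: G^*\subseteq G,\ \deg(G^* )\le\tau\}$. $\mathrm{Lap}(b)$ has density $\frac1{2b}e^{-|x|/b}$; all draws are independent. $\ln$ is the natural logarithm and $\log$ the base-2 logarithm (counting the doubling steps $\tau=1,2,4,\dots$). *)

theory Defs
  imports "HOL-Probability.Probability"
begin

definition simple_graph :: "'v set \<Rightarrow> ('v \<Rightarrow> 'v \<Rightarrow> bool) \<Rightarrow> bool" where
  "simple_graph V E \<longleftrightarrow> finite V \<and> (\<forall>u v. E u v \<longrightarrow> u \<in> V \<and> v \<in> V)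
     \<and> (\<forall>u v. E u v \<longrightarrow> E v u) \<and> (\<forall>v. \<not> E v v)"

definition has_edge :: "'v set \<Rightarrow> ('v \<Rightarrow> 'v \<Rightarrow> bool) \<Rightarrow> bool" where
  "has_edge V E \<longleftrightarrow> (\<exists>u\<in>V. \<exists>v\<in>V. E u v)"

definition deg_in :: "('v \<Rightarrow> 'v \<Rightarrow> bool) \<Rightarrow> 'v set \<Rightarrow> 'v \<Rightarrow> nat" where
  "deg_in E S v = card {w \<in> S. E v w}"

definition max_deg :: "('v \<Rightarrow> 'v \<Rightarrow> bool) \<Rightarrow> 'v set \<Rightarrow> nat" where
  "max_deg E S = Max (insert 0 (deg_in E S ` S))"

definition N_deg :: "'v set \<Rightarrow> ('v \<Rightarrow> 'v \<Rightarrow> bool) \<Rightarrow> real \<Rightarrow> nat" where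
  "N_deg V E t = card {v \<in> V. real (deg_in E V v) \<ge> t}"

definition Q_DelN :: "'v set \<Rightarrow> ('v \<Rightarrow> 'v \<Rightarrow> bool) \<Rightarrow> nat \<Rightarrow> int" where
  "Q_DelN V E \<tau> = - int (Min {card V - card S | S. S \<subseteq> V \<and> max_deg E S \<le> \<tau>})"

definition lap_density :: "real \<Rightarrow> real \<Rightarrow> real" where
  "lap_density b x = exp (- \<bar>x\<bar> / b) / (2 * b)"

(* The algorithm, as a function of the noise values z:
   z 0      : threshold noise  ~ Lap(4/eps)
   z 1      : final noise      ~ Lap(2/eps)
   z (k+2)  : noise of the k-th query (tau = 2^k) ~ Lap(4/eps) *)
definition alg_threshold :: "real \<Rightarrow> real \<Rightarrow> real" where
  "alg_threshold \<epsilon> \<beta> = - (8 / \<epsilon>) * ln (4 / \<beta>)"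

definition alg_stop :: "'v set \<Rightarrow> ('v \<Rightarrow> 'v \<Rightarrow> bool) \<Rightarrow> real \<Rightarrow> real \<Rightarrow> (nat \<Rightarrow> real) \<Rightarrow> nat" where
  "alg_stop V E \<epsilon> \<beta> z =
     (LEAST k. real_of_int (Q_DelN V E (2 ^ k)) + z (k + 2) > alg_threshold \<epsilon> \<beta> + z 0)"

definition alg_tau_star :: "'v set \<Rightarrow> ('v \<Rightarrow> 'v \<Rightarrow> bool) \<Rightarrow> real \<Rightarrow> real \<Rightarrow> real \<Rightarrow> (nat \<Rightarrow> real) \<Rightarrow> real" where
  "alg_tau_star V E \<epsilon> \<beta> \<delta> z =
     (let \<tau> = 2 ^ alg_stop V E \<epsilon> \<beta> z in
      real \<tau> + \<bar>real_of_int (Q_DelN V E \<tau>)\<bar> + z 1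
        + (2 / \<epsilon>) * ln (max (1 / \<delta>) (2 / \<beta>)) + 1)"

end

theory Submission
  imports Defs
begin

text \<open>
  Let \<open>\<tau> = 2\<^sup>s\<close> be the value at which the loop stops. Deleting \<open>|Q_DelN(G,\<tau>)|\<close> nodes
  brings the maximum degree down to \<open>\<tau>\<close>, so every node of degree \<open>> \<tau> + |Q_DelN(G,\<tau>)|\<close> is
  among the deleted ones. Unless the output noise falls below
  \<open>-(2/\<epsilon>) ln max(1/\<delta>, 2/\<beta>) - 1\<close> (probability at most \<open>\<delta>/2\<close>), \<open>\<tau>\<^sup>*\<close> exceeds
  \<open>\<tau> + |Q_DelN(G,\<tau>)|\<close>, whence \<open>N\<^bsub>\<tau>\<^sup>*\<^esub>(G) \<le> |Q_DelN(G,\<tau>)| < \<tau>\<^sup>*\<close>.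

  For the first claim take \<open>k\<close> least with \<open>deg(G) \<le> 2\<^sup>k\<close>, so \<open>2\<^sup>k \<le> 2 deg(G)\<close> and
  \<open>k + 1 \<le> log(4 deg(G))\<close>. As \<open>Q_DelN(G,2\<^sup>k) = 0\<close>, the loop stops by round \<open>k\<close> unless the
  threshold noise or the \<open>k\<close>-th query noise is large, and at the stopping round the noisy test
  bounds \<open>|Q_DelN|\<close> by the threshold plus two noise values. Each failure is a Laplace tail event
  (the query noises of rounds \<open>0..k\<close> at level \<open>\<beta>/(8(k+1)\<^sup>2)\<close> each), and a union bound
  caps their total probability by \<open>\<beta>\<close>.
\<close>

section \<open>Laplace tails and the union bound\<close>

lemma nn_integral_lap_density_ge:
  fixes b t :: real
  assumes "b > 0" and "t \<ge> 0"
  shows "(\<integral>\<^sup>+x. ennreal (lap_density b x) * indicator {t..} x \<partial>lborel) = ennreal (exp (- t / b) / 2)"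
proof -
  have "(\<integral>\<^sup>+x. ennreal (lap_density b x) * indicator {t..} x \<partial>lborel)
      = (\<integral>\<^sup>+x. ennreal (exp (- (1 / b) * x) / (2 * b)) * indicator {t..} x \<partial>lborel)"
    using assms by (intro nn_integral_cong) (auto simp: lap_density_def indicator_def)
  also have "\<dots> = ennreal (exp (- (1 / b) * t) / (1 / b) / (2 * b))"
    using assms has_integral_exp_minus_to_infinity[of "1 / b" t]
    by (intro nn_integral_has_integral_lebesgue' has_integral_divide) auto
  finally show ?thesis
    using assms by simp
qed

lemma nn_integral_lap_density_le:
  fixes b t :: real
  assumes "b > 0" and "t \<ge> 0"
  shows "(\<integral>\<^sup>+x. ennreal (lap_density b x) * indicator {..-t} x \<partial>lborel) = ennreal (exp (- t / b) / 2)"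
proof -
  have "(\<integral>\<^sup>+x. ennreal (lap_density b x) * indicator {..-t} x \<partial>lborel)
      = (\<integral>\<^sup>+x. ennreal (lap_density b (- x)) * indicator {..-t} (- x) \<partial>lborel)"
    by (subst lborel_distr_uminus[symmetric], subst nn_integral_distr) (auto simp: lap_density_def)
  also have "\<dots> = (\<integral>\<^sup>+x. ennreal (lap_density b x) * indicator {t..} x \<partial>lborel)"
    by (intro nn_integral_cong) (auto simp: lap_density_def indicator_def)
  finally show ?thesis
    using nn_integral_lap_density_ge[OF assms] by simp
qed

context prob_space
begin

lemma prob_laplace_ge:
  assumes "distributed M lborel X (\<lambda>x. ennreal (lap_density b x))" and "b > 0" and "t \<ge> 0"
  shows "prob {w \<in> space M. t \<le> X w} = exp (- t / b) / 2"
proof -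
  have "{w \<in> space M. t \<le> X w} = X -` {t..} \<inter> space M"
    by auto
  then show ?thesis
    using distributed_emeasure[OF assms(1), of "{t..}"] nn_integral_lap_density_ge[OF assms(2,3)]
    by (simp add: measure_def)
qed

lemma prob_laplace_le:
  assumes "distributed M lborel X (\<lambda>x. ennreal (lap_density b x))" and "b > 0" and "t \<ge> 0"
  shows "prob {w \<in> space M. X w \<le> - t} = exp (- t / b) / 2"
proof -
  have "{w \<in> space M. X w \<le> - t} = X -` {..-t} \<inter> space M"
    by auto
  then show ?thesis
    using distributed_emeasure[OF assms(1), of "{..-t}"] nn_integral_lap_density_le[OF assms(2,3)]
    by (simp add: measure_def)
qed

lemma prob_laplace_ge_ln:
  assumes "distributed M lborel X (\<lambda>x. ennreal (lap_density b x))" and "b > 0" and "r \<ge> 1"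
  shows "prob {w \<in> space M. b * ln r \<le> X w} = 1 / (2 * r)"
  using prob_laplace_ge[OF assms(1,2), of "b * ln r"] assms(2,3) by (simp add: exp_minus field_simps)

lemma prob_laplace_le_ln:
  assumes "distributed M lborel X (\<lambda>x. ennreal (lap_density b x))" and "b > 0" and "r \<ge> 1"
  shows "prob {w \<in> space M. X w \<le> - (b * ln r)} = 1 / (2 * r)"
  using prob_laplace_le[OF assms(1,2), of "b * ln r"] assms(2,3) by (simp add: exp_minus field_simps)

lemma prob_ge_1_minus_union_bound:
  assumes "set Fs \<subseteq> events" and "{w \<in> space M. P w} \<in> events"
    and "\<And>w. w \<in> space M \<Longrightarrow> w \<notin> \<Union>(set Fs) \<Longrightarrow> P w"
  shows "1 - sum_list (map prob Fs) \<le> prob {w \<in> space M. P w}"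
proof -
  have "prob (\<Union>(set Fs)) \<le> sum_list (map prob Fs)"
    using assms(1)
  proof (induction Fs)
    case (Cons F Fs)
    then have "prob (F \<union> \<Union>(set Fs)) \<le> prob F + prob (\<Union>(set Fs))"
      by (intro measure_Un_le) auto
    with Cons show ?case
      by simp
  qed simp
  moreover have "prob (space M - \<Union>(set Fs)) \<le> prob {w \<in> space M. P w}"
    using assms by (intro finite_measure_mono) auto
  moreover have "prob (space M - \<Union>(set Fs)) = 1 - prob (\<Union>(set Fs))"
    using assms(1) by (intro prob_compl) auto
  ultimately show ?thesis
    by linarith
qed

end

section \<open>Node deletion and high-degree nodes\<close>

lemma deg_in_le_max_deg: "finite S \<Longrightarrow> v \<in> S \<Longrightarrow> deg_in E S v \<le> max_deg E S"
  unfolding max_deg_def by (intro Max_ge) auto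

lemma max_deg_ge_1:
  assumes "finite V" and "has_edge V E"
  shows "1 \<le> max_deg E V"
proof -
  obtain u v where uv: "u \<in> V" "v \<in> V" "E u v"
    using assms(2) unfolding has_edge_def by blast
  then have "{w \<in> V. E u w} \<noteq> {}"
    by blast
  then have "1 \<le> deg_in E V u"
    using assms(1) by (simp add: deg_in_def Suc_le_eq card_gt_0_iff)
  also have "\<dots> \<le> max_deg E V"
    using assms(1) uv(1) by (rule deg_in_le_max_deg)
  finally show ?thesis .
qed

lemma deg_in_le_deg_in_subset:
  assumes "finite V" and "S \<subseteq> V"
  shows "deg_in E V v \<le> deg_in E S v + card (V - S)"
proof -
  have "{w \<in> V. E v w} \<subseteq> {w \<in> S. E v w} \<union> (V - S)"
    by blast
  moreover have "finite ({w \<in> S. E v w} \<union> (V - S))"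
    using assms by (simp add: finite_subset)
  ultimately have "deg_in E V v \<le> card ({w \<in> S. E v w} \<union> (V - S))"
    unfolding deg_in_def by (rule card_mono[rotated])
  also have "\<dots> \<le> deg_in E S v + card (V - S)"
    unfolding deg_in_def by (rule card_Un_le)
  finally show ?thesis .
qed

lemma Q_DelN_attained:
  assumes "finite V"
  obtains S where "S \<subseteq> V" and "max_deg E S \<le> \<tau>" and "int (card (V - S)) = - Q_DelN V E \<tau>"
proof -
  let ?A = "{card V - card S | S. S \<subseteq> V \<and> max_deg E S \<le> \<tau>}"
  have "card V - card {} \<in> ?A"
    by (force simp: max_deg_def)
  moreover have "?A \<subseteq> {..card V}"
    by auto
  ultimately have "Min ?A \<in> ?A"
    by (intro Min_in) (auto intro: finite_subset)
  then obtain S where S: "S \<subseteq> V" "max_deg E S \<le> \<tau>" "Min ?A = card V - card S"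
    by blast
  moreover have "card (V - S) = card V - card S"
    using assms S(1) by (intro card_Diff_subset) (auto intro: finite_subset)
  ultimately show thesis
    by (intro that) (simp_all add: Q_DelN_def)
qed

lemma Q_DelN_eq_0:
  assumes "finite V" and "max_deg E V \<le> \<tau>"
  shows "Q_DelN V E \<tau> = 0"
proof -
  let ?A = "{card V - card S | S. S \<subseteq> V \<and> max_deg E S \<le> \<tau>}"
  have "card V - card V \<in> ?A"
    using assms(2) by blast
  moreover have "?A \<subseteq> {..card V}"
    by auto
  ultimately have "Min ?A \<le> 0"
    by (intro Min_le) (auto intro: finite_subset)
  then show ?thesis
    by (simp add: Q_DelN_def)
qed

lemma N_deg_le_abs_Q_DelN:
  assumes "finite V" and "real \<tau> + \<bar>real_of_int (Q_DelN V E \<tau>)\<bar> < t"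
  shows "real (N_deg V E t) \<le> \<bar>real_of_int (Q_DelN V E \<tau>)\<bar>"
proof -
  obtain S where S: "S \<subseteq> V" "max_deg E S \<le> \<tau>" and card_S: "int (card (V - S)) = - Q_DelN V E \<tau>"
    using Q_DelN_attained[OF assms(1)] .
  have "{v \<in> V. t \<le> real (deg_in E V v)} \<subseteq> V - S"
  proof (intro subsetI DiffI)
    fix v assume v: "v \<in> {v \<in> V. t \<le> real (deg_in E V v)}"
    show "v \<notin> S"
    proof
      assume "v \<in> S"
      moreover have "finite S"
        using assms(1) S(1) by (rule finite_subset[rotated])
      ultimately have "deg_in E S v \<le> \<tau>"
        using deg_in_le_max_deg S(2) by (metis le_trans)
      then have "deg_in E V v \<le> \<tau> + card (V - S)"
        using deg_in_le_deg_in_subset[OF assms(1) S(1), of E v] by linarith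
      with v assms(2) card_S show False
        by auto
    qed
  qed auto
  then have "N_deg V E t \<le> card (V - S)"
    unfolding N_deg_def using assms(1) by (intro card_mono) auto
  with card_S show ?thesis
    by simp
qed

section \<open>The stopping index and the output\<close>

lemma power_of_two_bracket:
  assumes "1 \<le> (n :: nat)"
  obtains k where "n \<le> 2 ^ k" and "2 ^ k \<le> 2 * n"
proof -
  define k where "k = (LEAST k. n \<le> 2 ^ k)"
  have "n \<le> 2 ^ k"
    unfolding k_def by (rule LeastI_ex) (meson less_exp less_imp_le)
  moreover have "2 ^ k \<le> 2 * n"
  proof (cases k)
    case (Suc j)
    then have "j < k"
      by simp
    then have "\<not> n \<le> 2 ^ j"
      unfolding k_def by (rule not_less_Least)
    with Suc show ?thesis
      by simp
  qed (use assms in simp)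
  ultimately show thesis
    by (rule that)
qed

lemma log2_four_times_ge:
  assumes "2 ^ k \<le> 2 * n"
  shows "real k + 1 \<le> log 2 (4 * real n)"
proof -
  have le: "(2 :: real) ^ (k + 1) \<le> 4 * real n"
    using assms by (simp add: of_nat_mono[of "2 ^ k" "2 * n", simplified])
  moreover have pos: "(0 :: real) < 2 ^ (k + 1)"
    by simp
  moreover from le pos have "0 < 4 * real n"
    by linarith
  ultimately have "log 2 (2 ^ (k + 1)) \<le> log 2 (4 * real n)"
    by (subst log_le_cancel_iff) auto
  moreover have "log 2 ((2 :: real) ^ (k + 1)) = real k + 1"
    by (subst log_pow_cancel) auto
  ultimately show ?thesis
    by linarith
qed

lemma alg_stop_le:
  assumes "alg_threshold \<epsilon> \<beta> + z 0 < real_of_int (Q_DelN V E (2 ^ k)) + z (k + 2)"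
  shows "alg_stop V E \<epsilon> \<beta> z \<le> k"
  using assms unfolding alg_stop_def by (rule Least_le)

lemma alg_stop_stops:
  assumes "alg_threshold \<epsilon> \<beta> + z 0 < real_of_int (Q_DelN V E (2 ^ k)) + z (k + 2)"
  shows "alg_threshold \<epsilon> \<beta> + z 0
    < real_of_int (Q_DelN V E (2 ^ alg_stop V E \<epsilon> \<beta> z)) + z (alg_stop V E \<epsilon> \<beta> z + 2)"
  using assms unfolding alg_stop_def by (rule LeastI)

lemma alg_stop_bounds:
  fixes V :: "'v set" and E :: "'v \<Rightarrow> 'v \<Rightarrow> bool" and \<epsilon> \<beta> c :: real and z :: "nat \<Rightarrow> real"
  defines "a \<equiv> (4 / \<epsilon>) * ln (4 / \<beta>)" and "s \<equiv> alg_stop V E \<epsilon> \<beta> z"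
  assumes fin: "finite V" and k: "max_deg E V \<le> 2 ^ k"
    and threshold_noise: "\<bar>z 0\<bar> < a"
    and query_noise: "- a < z (k + 2)" "\<And>j. j \<le> k \<Longrightarrow> z (j + 2) < a + c"
  shows "s \<le> k" and "\<bar>real_of_int (Q_DelN V E (2 ^ s))\<bar> < 4 * a + c"
proof -
  have threshold: "alg_threshold \<epsilon> \<beta> = - 2 * a"
    unfolding a_def alg_threshold_def by simp
  have stops_at_k: "alg_threshold \<epsilon> \<beta> + z 0 < real_of_int (Q_DelN V E (2 ^ k)) + z (k + 2)"
    using Q_DelN_eq_0[OF fin k] threshold_noise query_noise(1) threshold by simp
  then show "s \<le> k"
    unfolding s_def by (rule alg_stop_le)
  then have "z (s + 2) < a + c"
    by (rule query_noise(2))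
  moreover have "alg_threshold \<epsilon> \<beta> + z 0 < real_of_int (Q_DelN V E (2 ^ s)) + z (s + 2)"
    unfolding s_def using stops_at_k by (rule alg_stop_stops)
  moreover have "Q_DelN V E (2 ^ s) \<le> 0"
    by (simp add: Q_DelN_def)
  ultimately show "\<bar>real_of_int (Q_DelN V E (2 ^ s))\<bar> < 4 * a + c"
    using threshold_noise threshold by simp
qed

lemma alg_tau_star_gt:
  assumes "- ((2 / \<epsilon>) * ln (max (1 / \<delta>) (2 / \<beta>)) + 1) < z 1"
  shows "real (2 ^ alg_stop V E \<epsilon> \<beta> z) + \<bar>real_of_int (Q_DelN V E (2 ^ alg_stop V E \<epsilon> \<beta> z))\<bar>
    < alg_tau_star V E \<epsilon> \<beta> \<delta> z"
  using assms by (simp add: alg_tau_star_def Let_def)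

lemma alg_tau_star_plus_N_deg_le:
  assumes "finite V" and "- ((2 / \<epsilon>) * ln (max (1 / \<delta>) (2 / \<beta>)) + 1) < z 1"
  shows "alg_tau_star V E \<epsilon> \<beta> \<delta> z + real (N_deg V E (alg_tau_star V E \<epsilon> \<beta> \<delta> z))
    \<le> 2 * alg_tau_star V E \<epsilon> \<beta> \<delta> z"
proof -
  note gt = alg_tau_star_gt[where V = V and E = E and z = z, OF assms(2)]
  moreover have "0 \<le> real (2 ^ alg_stop V E \<epsilon> \<beta> z)"
    by simp
  ultimately show ?thesis
    using N_deg_le_abs_Q_DelN[OF assms(1) gt] by linarith
qed

lemma alg_tau_star_bounds:
  fixes V :: "'v set" and E :: "'v \<Rightarrow> 'v \<Rightarrow> bool" and \<epsilon> \<beta> \<delta> :: real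
  defines "D \<equiv> max_deg E V" and "a \<equiv> (4 / \<epsilon>) * ln (4 / \<beta>)" and "m \<equiv> max (1 / \<delta>) (2 / \<beta>)"
  assumes fin: "finite V" and \<epsilon>: "0 < \<epsilon>" and k: "D \<le> 2 ^ k" "2 ^ k \<le> 2 * D"
    and threshold_noise: "\<bar>z 0\<bar> < a"
    and query_noise: "- a < z (k + 2)" "\<And>j. j \<le> k \<Longrightarrow> z (j + 2) < a + (8 / \<epsilon>) * ln (real k + 1)"
    and output_noise: "- ((2 / \<epsilon>) * ln m + 1) < z 1" "z 1 < (2 / \<epsilon>) * ln m"
  shows "alg_tau_star V E \<epsilon> \<beta> \<delta> z
      \<le> 2 * real D + (8 / \<epsilon>) * ln (log 2 (4 * real D)) + (16 / \<epsilon>) * ln (4 / \<beta>)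
        + (4 / \<epsilon>) * ln m + 1
    \<and> real (N_deg V E (alg_tau_star V E \<epsilon> \<beta> \<delta> z))
      \<le> (8 / \<epsilon>) * ln (log 2 (4 * real D)) + (16 / \<epsilon>) * ln (4 / \<beta>)"
proof -
  define s where "s = alg_stop V E \<epsilon> \<beta> z"
  define Q where "Q = \<bar>real_of_int (Q_DelN V E (2 ^ s))\<bar>"
  have "s \<le> k" and "Q < 4 * a + (8 / \<epsilon>) * ln (real k + 1)"
    using alg_stop_bounds[OF fin k(1)[unfolded D_def] threshold_noise[unfolded a_def]
        query_noise[unfolded a_def]]
    unfolding Q_def s_def a_def by auto
  moreover have "ln (real k + 1) \<le> ln (log 2 (4 * real D))"
    using log2_four_times_ge[OF k(2)] by (subst ln_le_cancel_iff) auto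
  then have "(8 / \<epsilon>) * ln (real k + 1) \<le> (8 / \<epsilon>) * ln (log 2 (4 * real D))"
    using \<epsilon> by (intro mult_left_mono) auto
  moreover have "4 * a = (16 / \<epsilon>) * ln (4 / \<beta>)"
    unfolding a_def by simp
  ultimately have Q_less: "Q < (8 / \<epsilon>) * ln (log 2 (4 * real D)) + (16 / \<epsilon>) * ln (4 / \<beta>)"
    by linarith
  have "(2 :: nat) ^ s \<le> 2 ^ k"
    using \<open>s \<le> k\<close> by (intro power_increasing) auto
  with k(2) have "real (2 ^ s) \<le> 2 * real D"
    by (metis of_nat_mono of_nat_mult of_nat_numeral order_trans)
  moreover have "alg_tau_star V E \<epsilon> \<beta> \<delta> z = real (2 ^ s) + Q + z 1 + (2 / \<epsilon>) * ln m + 1"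
    unfolding alg_tau_star_def s_def Q_def m_def Let_def by simp
  moreover have "real (N_deg V E (alg_tau_star V E \<epsilon> \<beta> \<delta> z)) \<le> Q"
    using N_deg_le_abs_Q_DelN[OF fin alg_tau_star_gt] output_noise(1) unfolding Q_def s_def m_def
    by simp
  moreover have "(4 / \<epsilon>) * ln m = 2 * ((2 / \<epsilon>) * ln m)"
    by simp
  ultimately show ?thesis
    using Q_less output_noise(2) by linarith
qed

lemma real_N_deg_eq_sum:
  assumes "finite V"
  shows "real (N_deg V E t) = (\<Sum>v\<in>V. if t \<le> real (deg_in E V v) then 1 else 0)"
proof -
  have "(\<Sum>v\<in>V. if t \<le> real (deg_in E V v) then 1 else 0) = (\<Sum>v\<in>{v \<in> V. t \<le> real (deg_in E V v)}. 1 :: real)"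
    using assms by (rule sum.inter_filter[symmetric])
  then show ?thesis
    by (simp add: N_deg_def)
qed

lemma measurable_N_deg:
  assumes "finite V" and [measurable]: "f \<in> borel_measurable M"
  shows "(\<lambda>w. real (N_deg V E (f w))) \<in> borel_measurable M"
  unfolding real_N_deg_eq_sum[OF assms(1)] by measurable

locale laplace_noise = prob_space M
  for M :: "'w measure" and Z :: "nat \<Rightarrow> 'w \<Rightarrow> real" and \<epsilon> :: real +
  assumes eps_pos: "0 < \<epsilon>"
    and threshold_noise: "distributed M lborel (Z 0) (\<lambda>x. ennreal (lap_density (4 / \<epsilon>) x))"
    and output_noise: "distributed M lborel (Z 1) (\<lambda>x. ennreal (lap_density (2 / \<epsilon>) x))"
    and query_noise: "\<And>k. distributed M lborel (Z (k + 2)) (\<lambda>x. ennreal (lap_density (4 / \<epsilon>) x))"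
begin

lemma measurable_Z [measurable]: "Z i \<in> borel_measurable M"
proof -
  consider "i = 0" | "i = 1" | j where "i = j + 2"
    by (metis One_nat_def add_2_eq_Suc' not0_implies_Suc)
  then show ?thesis
    using distributed_measurable[OF threshold_noise] distributed_measurable[OF output_noise]
      distributed_measurable[OF query_noise] by cases auto
qed

lemma measurable_alg_tau_star [measurable]:
  "(\<lambda>w. alg_tau_star V E \<epsilon> \<beta> \<delta> (\<lambda>i. Z i w)) \<in> borel_measurable M"
proof -
  have stop: "(\<lambda>w. alg_stop V E \<epsilon> \<beta> (\<lambda>i. Z i w)) \<in> measurable M (count_space UNIV)"
    unfolding alg_stop_def by measurable
  have "(\<lambda>w. (\<lambda>s w. real (2 ^ s) + \<bar>real_of_int (Q_DelN V E (2 ^ s))\<bar> + Z 1 w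
      + (2 / \<epsilon>) * ln (max (1 / \<delta>) (2 / \<beta>)) + 1) (alg_stop V E \<epsilon> \<beta> (\<lambda>i. Z i w)) w)
    \<in> borel_measurable M"
    by (rule measurable_compose_countable[OF _ stop]) measurable
  then show ?thesis
    by (simp add: alg_tau_star_def Let_def)
qed

lemma prob_output_noise_ge:
  "1 \<le> m \<Longrightarrow> prob {w \<in> space M. (2 / \<epsilon>) * ln m \<le> Z 1 w} = 1 / (2 * m)"
  using eps_pos by (intro prob_laplace_ge_ln[OF output_noise]) auto

lemma prob_output_noise_le:
  assumes "1 \<le> m"
  shows "prob {w \<in> space M. Z 1 w \<le> - ((2 / \<epsilon>) * ln m + 1)} \<le> 1 / (2 * m)"
proof -
  have "prob {w \<in> space M. Z 1 w \<le> - ((2 / \<epsilon>) * ln m + 1)}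
      \<le> prob {w \<in> space M. Z 1 w \<le> - ((2 / \<epsilon>) * ln m)}"
    by (intro finite_measure_mono) auto
  also have "\<dots> = 1 / (2 * m)"
    using eps_pos assms by (intro prob_laplace_le_ln[OF output_noise]) auto
  finally show ?thesis .
qed

lemma prob_query_noise_exceeds:
  assumes "0 < \<beta>" and "\<beta> \<le> 4"
  shows "prob (\<Union>j\<le>k. {w \<in> space M. (4 / \<epsilon>) * ln (4 / \<beta>) + (8 / \<epsilon>) * ln (real k + 1) \<le> Z (j + 2) w})
    \<le> \<beta> / 8"
proof -
  define r where "r = 4 * (real k + 1) ^ 2 / \<beta>"
  have "1 \<le> (real k + 1) ^ 2"
    by simp
  then have "\<beta> \<le> 4 * (real k + 1) ^ 2"
    using assms(2) by linarith
  then have "1 \<le> r"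
    using assms(1) unfolding r_def by (simp add: field_simps)
  have threshold: "(4 / \<epsilon>) * ln (4 / \<beta>) + (8 / \<epsilon>) * ln (real k + 1) = (4 / \<epsilon>) * ln r"
    using assms unfolding r_def by (simp add: ln_mult ln_div ln_realpow algebra_simps)
  have "prob (\<Union>j\<le>k. {w \<in> space M. (4 / \<epsilon>) * ln r \<le> Z (j + 2) w})
      \<le> (\<Sum>j\<le>k. prob {w \<in> space M. (4 / \<epsilon>) * ln r \<le> Z (j + 2) w})"
    by (intro finite_measure_subadditive_finite) auto
  also have "\<dots> = (real k + 1) / (2 * r)"
  proof -
    have "prob {w \<in> space M. (4 / \<epsilon>) * ln r \<le> Z (j + 2) w} = 1 / (2 * r)" for j
      using eps_pos \<open>1 \<le> r\<close> by (intro prob_laplace_ge_ln[OF query_noise]) auto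
    then show ?thesis
      by simp
  qed
  also have "\<dots> = \<beta> / (8 * (real k + 1))"
  proof -
    have "n / (2 * (4 * n ^ 2 / \<beta>)) = \<beta> / (8 * n)" if "0 < n" for n :: real
      using that assms(1) by (simp add: field_simps power2_eq_square)
    then show ?thesis
      unfolding r_def by simp
  qed
  also have "\<dots> \<le> \<beta> / 8"
    using assms by (intro divide_left_mono) auto
  finally show ?thesis
    unfolding threshold .
qed

lemma prob_alg_tau_star_plus_N_deg_le:
  assumes fin: "finite V" and \<delta>: "0 < \<delta>" "\<delta> \<le> 1"
  shows "1 - \<delta> \<le> prob {w \<in> space M.
            alg_tau_star V E \<epsilon> \<beta> \<delta> (\<lambda>i. Z i w)
              + real (N_deg V E (alg_tau_star V E \<epsilon> \<beta> \<delta> (\<lambda>i. Z i w)))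
            \<le> 2 * alg_tau_star V E \<epsilon> \<beta> \<delta> (\<lambda>i. Z i w)}"
    (is "_ \<le> prob {w \<in> space M. ?good w}")
proof -
  note [measurable] = measurable_N_deg[OF fin measurable_alg_tau_star]
  define m where "m = max (1 / \<delta>) (2 / \<beta>)"
  have "1 / \<delta> \<le> m"
    by (simp add: m_def)
  moreover have "1 \<le> 1 / \<delta>"
    using \<delta> by simp
  ultimately have "1 \<le> m"
    by linarith
  have "1 \<le> \<delta> * m"
    using \<open>1 / \<delta> \<le> m\<close> \<delta>(1) by (simp add: field_simps)
  then have "1 / (2 * m) \<le> \<delta>"
    using \<open>1 \<le> m\<close> by (simp add: field_simps)
  have "1 - sum_list (map prob [{w \<in> space M. Z 1 w \<le> - ((2 / \<epsilon>) * ln m + 1)}])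
    \<le> prob {w \<in> space M. ?good w}"
  proof (rule prob_ge_1_minus_union_bound)
    fix w assume "w \<in> space M" and "w \<notin> \<Union>(set [{w \<in> space M. Z 1 w \<le> - ((2 / \<epsilon>) * ln m + 1)}])"
    then have "- ((2 / \<epsilon>) * ln m + 1) < Z 1 w"
      by simp
    then show "?good w"
      unfolding m_def by (rule alg_tau_star_plus_N_deg_le[OF fin])
  qed (simp; intro conjI; measurable)+
  with prob_output_noise_le[OF \<open>1 \<le> m\<close>] \<open>1 / (2 * m) \<le> \<delta>\<close> show ?thesis
    by simp
qed

lemma prob_alg_tau_star_bounds:
  assumes fin: "finite V" and D: "1 \<le> max_deg E V" and \<beta>: "0 < \<beta>" "\<beta> \<le> 2"
  shows "1 - \<beta> \<le> prob {w \<in> space M.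
            alg_tau_star V E \<epsilon> \<beta> \<delta> (\<lambda>i. Z i w)
              \<le> 2 * real (max_deg E V) + (8 / \<epsilon>) * ln (log 2 (4 * real (max_deg E V)))
                 + (16 / \<epsilon>) * ln (4 / \<beta>) + (4 / \<epsilon>) * ln (max (1 / \<delta>) (2 / \<beta>)) + 1
            \<and> real (N_deg V E (alg_tau_star V E \<epsilon> \<beta> \<delta> (\<lambda>i. Z i w)))
              \<le> (8 / \<epsilon>) * ln (log 2 (4 * real (max_deg E V))) + (16 / \<epsilon>) * ln (4 / \<beta>)}"
    (is "_ \<le> prob {w \<in> space M. ?good w}")
proof -
  note [measurable] = measurable_N_deg[OF fin measurable_alg_tau_star]
  obtain k where k: "max_deg E V \<le> 2 ^ k" "2 ^ k \<le> 2 * max_deg E V"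
    using power_of_two_bracket[OF D] .
  define a where "a = (4 / \<epsilon>) * ln (4 / \<beta>)"
  define m where "m = max (1 / \<delta>) (2 / \<beta>)"
  have "1 \<le> 4 / \<beta>"
    using \<beta> by simp
  have "2 / \<beta> \<le> m"
    by (simp add: m_def)
  moreover have "1 \<le> 2 / \<beta>"
    using \<beta> by simp
  ultimately have "1 \<le> m"
    by linarith
  have "1 / (2 * m) \<le> \<beta> / 4"
    using \<open>2 / \<beta> \<le> m\<close> \<open>1 \<le> m\<close> \<beta>(1) by (simp add: field_simps)
  let ?bad = "[{w \<in> space M. a \<le> Z 0 w}, {w \<in> space M. Z 0 w \<le> - a},
    {w \<in> space M. Z (k + 2) w \<le> - a},
    \<Union>j\<le>k. {w \<in> space M. a + (8 / \<epsilon>) * ln (real k + 1) \<le> Z (j + 2) w},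
    {w \<in> space M. (2 / \<epsilon>) * ln m \<le> Z 1 w}, {w \<in> space M. Z 1 w \<le> - ((2 / \<epsilon>) * ln m + 1)}]"
  have "1 - sum_list (map prob ?bad) \<le> prob {w \<in> space M. ?good w}"
  proof (rule prob_ge_1_minus_union_bound)
    fix w assume "w \<in> space M" and "w \<notin> \<Union>(set ?bad)"
    then have "\<bar>Z 0 w\<bar> < a" and "- a < Z (k + 2) w"
      and "\<And>j. j \<le> k \<Longrightarrow> Z (j + 2) w < a + (8 / \<epsilon>) * ln (real k + 1)"
      and "- ((2 / \<epsilon>) * ln m + 1) < Z 1 w" and "Z 1 w < (2 / \<epsilon>) * ln m"
      by (auto simp: not_le abs_less_iff)
    then show "?good w"
      unfolding a_def m_def by (rule alg_tau_star_bounds[OF fin eps_pos k])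
  qed (simp; intro conjI; measurable)+
  moreover have "sum_list (map prob ?bad) \<le> \<beta>"
  proof -
    have "prob {w \<in> space M. a \<le> Z 0 w} = \<beta> / 8" and "prob {w \<in> space M. Z 0 w \<le> - a} = \<beta> / 8"
      and "prob {w \<in> space M. Z (k + 2) w \<le> - a} = \<beta> / 8"
      using prob_laplace_ge_ln[OF threshold_noise _ \<open>1 \<le> 4 / \<beta>\<close>]
        prob_laplace_le_ln[OF threshold_noise _ \<open>1 \<le> 4 / \<beta>\<close>]
        prob_laplace_le_ln[OF query_noise _ \<open>1 \<le> 4 / \<beta>\<close>] eps_pos
      unfolding a_def by simp_all
    moreover have "prob (\<Union>j\<le>k. {w \<in> space M. a + (8 / \<epsilon>) * ln (real k + 1) \<le> Z (j + 2) w}) \<le> \<beta> / 8"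
      unfolding a_def using \<beta> by (intro prob_query_noise_exceeds) auto
    ultimately show ?thesis
      using prob_output_noise_ge[OF \<open>1 \<le> m\<close>] prob_output_noise_le[OF \<open>1 \<le> m\<close>]
        \<open>1 / (2 * m) \<le> \<beta> / 4\<close> by simp
  qed
  ultimately show ?thesis
    by linarith
qed

end

theorem mainTheorem5:
  fixes M :: "'w measure" and Z :: "nat \<Rightarrow> 'w \<Rightarrow> real"
    and V :: "'v set" and E :: "'v \<Rightarrow> 'v \<Rightarrow> bool"
    and \<epsilon> \<beta> \<delta> :: real
  assumes "prob_space M"
    and "prob_space.indep_vars M (\<lambda>_. borel) Z UNIV"
    and "distributed M lborel (Z 0) (\<lambda>x. ennreal (lap_density (4 / \<epsilon>) x))"
    and "distributed M lborel (Z 1) (\<lambda>x. ennreal (lap_density (2 / \<epsilon>) x))"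
    and "\<And>k. distributed M lborel (Z (k + 2)) (\<lambda>x. ennreal (lap_density (4 / \<epsilon>) x))"
    and "\<epsilon> > 0" and "0 < \<beta>" and "\<beta> < 1" and "0 < \<delta>" and "\<delta> < 1"
    and "simple_graph V E" and "has_edge V E"
  shows "measure M {w \<in> space M.
            alg_tau_star V E \<epsilon> \<beta> \<delta> (\<lambda>i. Z i w)
              \<le> 2 * real (max_deg E V) + (8 / \<epsilon>) * ln (log 2 (4 * real (max_deg E V)))
                 + (16 / \<epsilon>) * ln (4 / \<beta>) + (4 / \<epsilon>) * ln (max (1 / \<delta>) (2 / \<beta>)) + 1
            \<and> real (N_deg V E (alg_tau_star V E \<epsilon> \<beta> \<delta> (\<lambda>i. Z i w)))
              \<le> (8 / \<epsilon>) * ln (log 2 (4 * real (max_deg E V))) + (16 / \<epsilon>) * ln (4 / \<beta>)}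
           \<ge> 1 - \<beta>
       \<and> measure M {w \<in> space M.
            alg_tau_star V E \<epsilon> \<beta> \<delta> (\<lambda>i. Z i w)
              + real (N_deg V E (alg_tau_star V E \<epsilon> \<beta> \<delta> (\<lambda>i. Z i w)))
            \<le> 2 * alg_tau_star V E \<epsilon> \<beta> \<delta> (\<lambda>i. Z i w)} \<ge> 1 - \<delta>"
proof -
  \<comment> \<open>The union bound needs no independence.\<close>
  interpret laplace_noise M Z \<epsilon>
    using assms(1,3-6) by (simp add: laplace_noise_def laplace_noise_axioms_def)
  have fin: "finite V"
    using assms(11) by (simp add: simple_graph_def)
  show ?thesis
    using prob_alg_tau_star_bounds[OF fin max_deg_ge_1[OF fin assms(12)]]
      prob_alg_tau_star_plus_N_deg_le[OF fin] assms(7-10) by simp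
qed

end
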